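(* Let $q$ be a prime power, $k\ge1$ and $n\ge 2k+1$. If $\mathcal{L}$ is a Cameron-Liebler $k$-set of $\mathrm{AG}(n,q)$ with parameter $x=1$, then $\mathcal{L}$ consists of all affine $k$-spaces through some fixed affine point.
   Context: $\mathrm{AG}(n,q)$ is $\mathrm{PG}(n,q)$ with a hyperplane $\pi_\infty$ removed; affine points are points outside $\pi_\infty$, affine $k$-spaces are $k$-dimensional projective subspaces not contained in $\pi_\infty$. With $A_n$ the incidence matrix of affine points versus affine $k$-spaces, a set $\mathcal{L}$ of affine $k$-spaces is a Cameron-Liebler $k$-set of $\mathrm{AG}(n,q)$ if its characteristic vector lies in the real row space $\mathrm{Im}(A_n^T)$; its parameter is $|\mathcal{L}|/\left[{n\atop k}\right]_q$ with $\left[{a\atop b}\right]_q=\frac{(q^a-1)\cdots(q^{a-b+1}-1)}{(q^b-1)\cdots(q-1)}$. *)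

theory Defs
  imports "HOL-Analysis.Analysis"
begin

text \<open>AG(n,q) is modelled as the vector space F^n over a finite field F with |F| = q
  (every prime power q is the order of some finite field, and every finite field has
  prime power order). The dimension n is CARD('n).\<close>

definition vsmult :: "'F::field \<Rightarrow> 'F ^ 'n \<Rightarrow> 'F ^ 'n" where
  "vsmult c x = (\<chi> i. c * x $ i)"

definition affine_kspace :: "nat \<Rightarrow> ('F::field ^ 'n) set \<Rightarrow> bool" where
  "affine_kspace k S \<longleftrightarrow>
     (\<exists>p v. (\<forall>c::nat \<Rightarrow> 'F. (\<Sum>j<k. vsmult (c j) (v j)) = 0 \<longrightarrow> (\<forall>j<k. c j = 0))
          \<and> S = {p + (\<Sum>j<k. vsmult (c j) (v j)) | c. True})"

definition affine_kspaces :: "nat \<Rightarrow> ('F::field ^ 'n) set set" where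
  "affine_kspaces k = {S. affine_kspace k S}"

text \<open>Cameron-Liebler k-set: the characteristic vector of L (indexed by affine k-spaces)
  lies in Im(A_n^T), where A_n is the point/k-space incidence matrix; i.e. there is a real
  weight w on affine points such that chi_L(K) = sum of w(P) over points P in K, for every
  affine k-space K.\<close>
definition cameron_liebler :: "nat \<Rightarrow> ('F::{field,finite} ^ 'n) set set \<Rightarrow> bool" where
  "cameron_liebler k L \<longleftrightarrow> L \<subseteq> affine_kspaces k \<and>
     (\<exists>w :: 'F ^ 'n \<Rightarrow> real. \<forall>K \<in> affine_kspaces k.
        (if K \<in> L then 1 else 0) = (\<Sum>P\<in>K. w P))"

definition gauss_binom :: "nat \<Rightarrow> nat \<Rightarrow> real \<Rightarrow> real" where
  "gauss_binom a b q = (\<Prod>i<b. (q ^ (a - i) - 1)) / (\<Prod>i<b. (q ^ (i + 1) - 1))"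

definition cl_parameter :: "nat \<Rightarrow> ('F::{field,finite} ^ 'n) set set \<Rightarrow> real" where
  "cl_parameter k L = real (card L) / gauss_binom CARD('n) k (real CARD('F))"

end

(*
  Let w be a weight on the points witnessing that L is a Cameron-Liebler set. Every partition
  of the points into affine k-spaces then contains exactly (sum of w over all points) members
  of L. Applied to the [n k]_q parallel classes, this number is the parameter, so here every
  such partition contains exactly one member of L.

  If two members of L have their directions inside a subspace M but lie in different cosets
  of M, a partition containing both is obtained by taking cosets of the first direction inside
  one coset of M and cosets of the second direction everywhere else. Hence for a functional u,
  the value u.p is the same for all members p + W of L with W inside the kernel of u. Since
  n >= k + 2, the common kernel of any two functionals contains k-subspaces, so this value is
  linear in u and equals u.P for a point P. A functional separating P from a member of L not
  through P gives a contradiction, so L is the pencil of k-spaces through P.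
*)

theory Submission
  imports Defs
begin

section \<open>Affine k-spaces as cosets of k-dimensional subspaces\<close>

definition subspaces_of_dim :: "nat \<Rightarrow> ('F::field ^ 'n) set set" where
  "subspaces_of_dim k = {W. vec.subspace W \<and> vec.dim W = k}"

lemma vsmult_eq_vector_scalar_mult: "vsmult = (*s)"
  by (auto simp: vsmult_def fun_eq_iff vec_eq_iff)

lemma combinations_eq_span:
  fixes v :: "nat \<Rightarrow> 'F::field ^ 'n"
  assumes "inj_on v {..<k}"
  shows "{\<Sum>j<k. c j *s v j | c. True} = vec.span (v ` {..<k})"
proof -
  have "vec.span (v ` {..<k}) = range (\<lambda>u. \<Sum>j<k. u (v j) *s v j)"
    unfolding vec.span_finite[OF finite_imageI[OF finite_lessThan]] sum.reindex[OF assms] o_def ..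
  also have "\<dots> = {\<Sum>j<k. c j *s v j | c. True}"
  proof (intro equalityI subsetI)
    fix x assume "x \<in> {\<Sum>j<k. c j *s v j | c. True}"
    then obtain c where x: "x = (\<Sum>j<k. c j *s v j)" by blast
    have "x = (\<Sum>j<k. (c \<circ> the_inv_into {..<k} v) (v j) *s v j)"
      unfolding x by (intro sum.cong) (simp_all add: the_inv_into_f_f[OF assms])
    then show "x \<in> range (\<lambda>u. \<Sum>j<k. u (v j) *s v j)" by blast
  qed auto
  finally show ?thesis ..
qed

lemma combinations_independent_iff:
  fixes v :: "nat \<Rightarrow> 'F::field ^ 'n"
  shows "(\<forall>c. (\<Sum>j<k. c j *s v j) = 0 \<longrightarrow> (\<forall>j<k. c j = 0))
     \<longleftrightarrow> inj_on v {..<k} \<and> vec.independent (v ` {..<k})"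
proof
  assume indep: "\<forall>c. (\<Sum>j<k. c j *s v j) = 0 \<longrightarrow> (\<forall>j<k. c j = 0)"
  have inj: "inj_on v {..<k}"
  proof (rule inj_onI, rule ccontr)
    fix i j assume ij: "i \<in> {..<k}" "j \<in> {..<k}" "v i = v j" "i \<noteq> j"
    let ?c = "\<lambda>l. if l = i then 1 else if l = j then -1 else 0"
    have "(\<Sum>l<k. ?c l *s v l) = (\<Sum>l<k. (if l = i then v i else 0) - (if l = j then v j else 0))"
      by (rule sum.cong) (use ij in auto)
    also have "\<dots> = 0" using ij by (simp add: sum_subtractf)
    finally show False using indep ij by fastforce
  qed
  moreover have "vec.independent (v ` {..<k})"
    unfolding vec.independent_explicit
  proof (intro conjI allI impI ballI)
    fix c b assume "(\<Sum>b\<in>v ` {..<k}. c b *s b) = 0" "b \<in> v ` {..<k}"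
    then show "c b = 0" using indep[rule_format, of "c \<circ> v"] by (auto simp: sum.reindex[OF inj])
  qed simp
  ultimately show "inj_on v {..<k} \<and> vec.independent (v ` {..<k})" ..
next
  assume "inj_on v {..<k} \<and> vec.independent (v ` {..<k})"
  then have inj: "inj_on v {..<k}" and indep: "vec.independent (v ` {..<k})" by blast+
  show "\<forall>c. (\<Sum>j<k. c j *s v j) = 0 \<longrightarrow> (\<forall>j<k. c j = 0)"
  proof (intro allI impI)
    fix c j assume "(\<Sum>j<k. c j *s v j) = 0" "j < k"
    moreover have "(\<Sum>j<k. c j *s v j) = (\<Sum>b\<in>v ` {..<k}. c (the_inv_into {..<k} v b) *s b)"
      by (simp add: sum.reindex[OF inj] the_inv_into_f_f[OF inj])
    ultimately show "c j = 0"
      using indep the_inv_into_f_f[OF inj] unfolding vec.independent_explicit by fastforce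
  qed
qed

lemma affine_kspaces_eq_cosets:
  "affine_kspaces k = {(+) p ` W | p W. W \<in> (subspaces_of_dim k :: ('F::field ^ 'n) set set)}"
proof (intro equalityI subsetI)
  fix K :: "('F ^ 'n) set" assume "K \<in> affine_kspaces k"
  then obtain p v where v: "inj_on v {..<k}" "vec.independent (v ` {..<k})"
    and K: "K = {p + (\<Sum>j<k. c j *s v j) | c. True}"
    unfolding affine_kspaces_def affine_kspace_def vsmult_eq_vector_scalar_mult
      combinations_independent_iff by blast
  have "K = (+) p ` vec.span (v ` {..<k})"
    unfolding K combinations_eq_span[OF v(1), symmetric] by blast
  moreover have "vec.span (v ` {..<k}) \<in> subspaces_of_dim k"
    using v by (simp add: subspaces_of_dim_def vec.dim_eq_card_independent card_image)
  ultimately show "K \<in> {(+) p ` W | p W. W \<in> subspaces_of_dim k}" by blast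
next
  fix K :: "('F ^ 'n) set" assume "K \<in> {(+) p ` W | p W. W \<in> subspaces_of_dim k}"
  then obtain p W where K: "K = (+) p ` W" and W: "vec.subspace W" "vec.dim W = k"
    unfolding subspaces_of_dim_def by blast
  obtain B where B: "finite B" "B \<subseteq> W" "vec.independent B" "vec.span B = W" "card B = k"
    unfolding W(2)[symmetric] by (rule vec.basis_subspace_exists[OF W(1)])
  obtain v where v: "bij_betw v {..<k} B"
    using ex_bij_betw_nat_finite[OF B(1)] B(5) by (auto simp: atLeast0LessThan)
  then have inj: "inj_on v {..<k}" and img: "v ` {..<k} = B" by (auto simp: bij_betw_def)
  have "K = {p + (\<Sum>j<k. c j *s v j) | c. True}"
    unfolding K B(4)[symmetric] img[symmetric] combinations_eq_span[OF inj, symmetric] by blast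
  then show "K \<in> affine_kspaces k"
    using inj B(3) img
    unfolding affine_kspaces_def affine_kspace_def vsmult_eq_vector_scalar_mult
      combinations_independent_iff by blast
qed

lemma mem_coset_iff:
  fixes x p :: "'a::ab_group_add"
  shows "x \<in> (+) p ` W \<longleftrightarrow> x - p \<in> W"
  by (auto intro: image_eqI[where x = "x - p"])

lemma subspace_add_mem_iff: "vec.subspace W \<Longrightarrow> d \<in> W \<Longrightarrow> x + d \<in> W \<longleftrightarrow> x \<in> W"
  by (metis add_diff_cancel vec.subspace_add vec.subspace_diff)

lemma coset_eq_coset_iff:
  assumes W: "vec.subspace W" and W': "vec.subspace W'"
  shows "(+) p ` W = (+) p' ` W' \<longleftrightarrow> W = W' \<and> p - p' \<in> W"
proof
  assume eq: "(+) p ` W = (+) p' ` W'"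
  have "p' \<in> (+) p ` W" using eq vec.subspace_0[OF W'] by force
  then have d: "p' - p \<in> W" using mem_coset_iff by blast
  have "x \<in> W' \<longleftrightarrow> x + (p' - p) \<in> W" for x
    using eq mem_coset_iff[of "p' + x" p W] mem_coset_iff[of "p' + x" p' W']
    by (simp add: algebra_simps)
  then have "W' = W" using subspace_add_mem_iff[OF W d] by auto
  moreover have "p - p' \<in> W" using vec.subspace_neg[OF W d] by simp
  ultimately show "W = W' \<and> p - p' \<in> W" by simp
next
  assume "W = W' \<and> p - p' \<in> W"
  then have "x - p \<in> W \<longleftrightarrow> x - p' \<in> W'" for x
    using subspace_add_mem_iff[OF W, of "p - p'" "x - p"] by auto
  then show "(+) p ` W = (+) p' ` W'"
    using mem_coset_iff by blast
qed

lemma coset_eq_coset_of_mem: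
  "vec.subspace W \<Longrightarrow> x \<in> (+) p ` W \<Longrightarrow> (+) x ` W = (+) p ` W"
  by (simp add: coset_eq_coset_iff mem_coset_iff)

section \<open>Counting k-dimensional subspaces\<close>

lemma card_span:
  fixes B :: "('F::{field,finite} ^ 'n) set"
  assumes "vec.independent B"
  shows "card (vec.span B) = CARD('F) ^ card B"
proof -
  have fin: "finite B" using assms by (rule vec.finiteI_independent)
  let ?comb = "\<lambda>c. \<Sum>b\<in>B. c b *s b"
  have "vec.span B = ?comb ` (B \<rightarrow>\<^sub>E UNIV)"
    unfolding vec.span_finite[OF fin]
  proof
    show "range ?comb \<subseteq> ?comb ` (B \<rightarrow>\<^sub>E UNIV)"
    proof
      fix x assume "x \<in> range ?comb"
      then obtain c where "x = ?comb c" by blast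
      then show "x \<in> ?comb ` (B \<rightarrow>\<^sub>E UNIV)" by (intro image_eqI[of _ _ "restrict c B"]) auto
    qed
  qed blast
  moreover have "inj_on ?comb (B \<rightarrow>\<^sub>E UNIV)"
  proof (rule inj_onI)
    fix c d assume c: "c \<in> B \<rightarrow>\<^sub>E UNIV" and d: "d \<in> B \<rightarrow>\<^sub>E UNIV" and eq: "?comb c = ?comb d"
    have "(\<Sum>b\<in>B. (c b - d b) *s b) = 0"
      using eq by (simp add: sum_subtractf)
    then have "\<forall>b\<in>B. c b - d b = 0"
      using assms unfolding vec.independent_explicit by (auto dest: spec[of _ "\<lambda>b. c b - d b"])
    then show "c = d" using c d by (intro PiE_ext) auto
  qed
  ultimately show ?thesis by (simp add: card_image card_PiE fin)
qed

lemma card_subspace: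
  fixes W :: "('F::{field,finite} ^ 'n) set"
  assumes "vec.subspace W"
  shows "card W = CARD('F) ^ vec.dim W"
proof -
  obtain B where "finite B" "B \<subseteq> W" "vec.independent B" "vec.span B = W" "card B = vec.dim W"
    by (rule vec.basis_subspace_exists[OF assms])
  then show ?thesis using card_span[of B] by simp
qed

definition independent_lists :: "nat \<Rightarrow> ('F::field ^ 'n) set \<Rightarrow> ('F ^ 'n) list set" where
  "independent_lists k S =
     {xs. length xs = k \<and> distinct xs \<and> set xs \<subseteq> S \<and> vec.independent (set xs)}"

lemma finite_independent_lists: "finite (independent_lists k (S :: ('F::{field,finite} ^ 'n) set))"
  by (rule finite_subset[OF _ finite_lists_length_eq[OF finite_class.finite_UNIV, of k]])
    (auto simp: independent_lists_def)

lemma independent_lists_0: "independent_lists 0 S = {[]}"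
  by (auto simp: independent_lists_def vec.independent_empty)

lemma independent_lists_Suc:
  "independent_lists (Suc k) S =
     (\<lambda>(xs, y). y # xs) ` (SIGMA xs:independent_lists k S. S - vec.span (set xs))"
proof (intro equalityI subsetI)
  fix zs assume "zs \<in> independent_lists (Suc k) S"
  then obtain y xs where zs: "zs = y # xs" and xs: "length xs = k" "distinct xs" "set xs \<subseteq> S"
    and y: "y \<in> S" "y \<notin> set xs" and indep: "vec.independent (insert y (set xs))"
    by (auto simp: independent_lists_def length_Suc_conv)
  have "xs \<in> independent_lists k S"
    using xs vec.independent_mono[OF indep] by (auto simp: independent_lists_def)
  moreover have "y \<notin> vec.span (set xs)"
    using indep y(2) by (simp add: vec.independent_insert)
  ultimately show "zs \<in> (\<lambda>(xs, y). y # xs) ` (SIGMA xs:independent_lists k S. S - vec.span (set xs))"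
    using zs y(1) by force
next
  fix zs assume "zs \<in> (\<lambda>(xs, y). y # xs) ` (SIGMA xs:independent_lists k S. S - vec.span (set xs))"
  then obtain xs y where zs: "zs = y # xs" and xs: "xs \<in> independent_lists k S"
    and y: "y \<in> S" "y \<notin> vec.span (set xs)"
    by auto
  then have "y \<notin> set xs" using vec.span_base by blast
  then show "zs \<in> independent_lists (Suc k) S"
    using zs xs y vec.independent_insertI[of y "set xs"] by (simp add: independent_lists_def)
qed

lemma card_independent_lists:
  fixes S :: "('F::{field,finite} ^ 'n) set"
  assumes "vec.subspace S"
  shows "card (independent_lists k S) = (\<Prod>i<k. card S - CARD('F) ^ i)"
proof (induction k)
  case 0
  then show ?case by (simp add: independent_lists_0)
next
  case (Suc k)
  have "card (independent_lists (Suc k) S)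
      = card (SIGMA xs:independent_lists k S. S - vec.span (set xs))"
    unfolding independent_lists_Suc by (rule card_image) (auto simp: inj_on_def)
  also have "\<dots> = (\<Sum>xs\<in>independent_lists k S. card (S - vec.span (set xs)))"
    by (simp add: finite_independent_lists)
  also have "\<dots> = (\<Sum>xs\<in>independent_lists k S. card S - CARD('F) ^ k)"
  proof (rule sum.cong[OF refl])
    fix xs assume xs: "xs \<in> independent_lists k S"
    then have "vec.span (set xs) \<subseteq> S"
      using assms by (intro vec.span_minimal) (auto simp: independent_lists_def)
    moreover have "card (vec.span (set xs)) = CARD('F) ^ k"
      using xs by (simp add: independent_lists_def card_span distinct_card)
    ultimately show "card (S - vec.span (set xs)) = card S - CARD('F) ^ k"
      by (simp add: card_Diff_subset)
  qed
  finally show ?case by (simp add: Suc.IH)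
qed

lemma independent_lists_spanning:
  assumes "W \<in> subspaces_of_dim k"
  shows "{xs \<in> independent_lists k UNIV. vec.span (set xs) = W} = independent_lists k W"
proof -
  have span_eq: "vec.span (set xs) = W" if "xs \<in> independent_lists k W" for xs
  proof (rule antisym)
    show "vec.span (set xs) \<subseteq> W"
      using that assms by (intro vec.span_minimal) (auto simp: independent_lists_def subspaces_of_dim_def)
    show "W \<subseteq> vec.span (set xs)"
      using that assms by (intro vec.card_ge_dim_independent)
        (auto simp: independent_lists_def subspaces_of_dim_def distinct_card)
  qed
  show ?thesis
  proof (intro equalityI subsetI)
    fix xs assume "xs \<in> {xs \<in> independent_lists k UNIV. vec.span (set xs) = W}"
    then show "xs \<in> independent_lists k W"
      using vec.span_superset[of "set xs"] by (auto simp: independent_lists_def)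
  next
    fix xs assume "xs \<in> independent_lists k W"
    then show "xs \<in> {xs \<in> independent_lists k UNIV. vec.span (set xs) = W}"
      using span_eq by (auto simp: independent_lists_def)
  qed
qed

lemma span_independent_lists:
  "(\<lambda>xs. vec.span (set xs)) ` independent_lists k UNIV = (subspaces_of_dim k :: ('F::field ^ 'n) set set)"
proof (intro equalityI subsetI)
  fix W :: "('F ^ 'n) set" assume "W \<in> (\<lambda>xs. vec.span (set xs)) ` independent_lists k UNIV"
  then obtain xs where xs: "xs \<in> independent_lists k UNIV" and W: "W = vec.span (set xs)"
    by blast
  have "vec.dim W = card (set xs)"
    using xs unfolding W independent_lists_def by (simp add: vec.dim_eq_card_independent)
  also have "\<dots> = k" using xs by (simp add: independent_lists_def distinct_card)
  finally show "W \<in> subspaces_of_dim k" by (simp add: subspaces_of_dim_def W)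
next
  fix W :: "('F ^ 'n) set" assume "W \<in> subspaces_of_dim k"
  then have W: "vec.subspace W" "vec.dim W = k" by (simp_all add: subspaces_of_dim_def)
  obtain B where B: "finite B" "B \<subseteq> W" "vec.independent B" "vec.span B = W" "card B = k"
    unfolding W(2)[symmetric] by (rule vec.basis_subspace_exists[OF W(1)])
  obtain xs where xs: "set xs = B" "distinct xs" using finite_distinct_list[OF B(1)] by blast
  then have "length xs = k" using B(5) distinct_card by fastforce
  then have "xs \<in> independent_lists k UNIV" using xs B(3) by (simp add: independent_lists_def)
  moreover have "W = vec.span (set xs)" using xs B(4) by simp
  ultimately show "W \<in> (\<lambda>xs. vec.span (set xs)) ` independent_lists k UNIV" by blast
qed

lemma card_subspaces_of_dim_mult:
  "card (subspaces_of_dim k :: ('F::{field,finite} ^ 'n) set set)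
       * (\<Prod>i<k. CARD('F) ^ k - CARD('F) ^ i)
     = (\<Prod>i<k. CARD('F) ^ CARD('n) - CARD('F) ^ i)"
proof -
  let ?I = "independent_lists k (UNIV :: ('F ^ 'n) set)"
  have "(\<Prod>i<k. CARD('F) ^ CARD('n) - CARD('F) ^ i) = card ?I"
    by (simp add: card_independent_lists)
  also have "\<dots> = (\<Sum>W\<in>subspaces_of_dim k. card {xs \<in> ?I. vec.span (set xs) = W})"
    using sum.image_gen[OF finite_independent_lists[of k UNIV],
        where h = "\<lambda>_. 1 :: nat" and g = "\<lambda>xs. vec.span (set xs)"]
    by (simp add: span_independent_lists)
  also have "\<dots> = (\<Sum>W \<in> (subspaces_of_dim k :: ('F ^ 'n) set set).
      \<Prod>i<k. CARD('F) ^ k - CARD('F) ^ i)"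
  proof (rule sum.cong[OF refl])
    fix W :: "('F ^ 'n) set" assume W: "W \<in> subspaces_of_dim k"
    then have "card W = CARD('F) ^ k" by (simp add: card_subspace subspaces_of_dim_def)
    then show "card {xs \<in> ?I. vec.span (set xs) = W} = (\<Prod>i<k. CARD('F) ^ k - CARD('F) ^ i)"
      using W by (simp add: independent_lists_spanning card_independent_lists subspaces_of_dim_def)
  qed
  finally show ?thesis by simp
qed

lemma prod_power_diff_eq:
  fixes r :: real
  assumes "k \<le> m"
  shows "(\<Prod>i<k. r ^ m - r ^ i) = (\<Prod>i<k. r ^ i) * (\<Prod>i<k. r ^ (m - i) - 1)"
proof -
  have "(\<Prod>i<k. r ^ m - r ^ i) = (\<Prod>i<k. r ^ i * (r ^ (m - i) - 1))"
    using assms by (intro prod.cong refl) (simp add: algebra_simps flip: power_add)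
  then show ?thesis by (simp add: prod.distrib)
qed

lemma field_card_ge_2: "2 \<le> CARD('F::{field,finite})"
  using card_mono[of UNIV "{0::'F, 1}"] by simp

lemma card_subspaces_of_dim:
  assumes "k \<le> CARD('n)"
  shows "real (card (subspaces_of_dim k :: ('F::{field,finite} ^ 'n) set set))
    = gauss_binom CARD('n) k (real CARD('F))"
proof -
  define r where "r = real CARD('F)"
  have r: "2 \<le> r" using field_card_ge_2[where 'F = 'F] by (simp add: r_def)
  have real_diff: "real (CARD('F) ^ m - CARD('F) ^ i) = r ^ m - r ^ i" if "i \<le> m" for i m
    using power_increasing[OF that, of "CARD('F)"] field_card_ge_2[where 'F = 'F]
    by (simp add: r_def)
  have "(\<Prod>i<k. r ^ (k - i) - 1) = (\<Prod>i<k. r ^ (k - Suc i + 1) - 1)"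
    by (intro prod.cong refl) (simp add: Suc_diff_Suc)
  also have "\<dots> = (\<Prod>i<k. r ^ (i + 1) - 1)"
    by (rule prod.nat_diff_reindex)
  finally have reindex: "(\<Prod>i<k. r ^ (k - i) - 1) = (\<Prod>i<k. r ^ (i + 1) - 1)" .
  have "real (card (subspaces_of_dim k :: ('F ^ 'n) set set)) * (\<Prod>i<k. r ^ k - r ^ i)
      = (\<Prod>i<k. r ^ CARD('n) - r ^ i)"
    using arg_cong[OF card_subspaces_of_dim_mult[where 'F = 'F and 'n = 'n and k = k], of real] assms
    by (simp add: real_diff)
  then have "real (card (subspaces_of_dim k :: ('F ^ 'n) set set)) * (\<Prod>i<k. r ^ (i + 1) - 1)
      = (\<Prod>i<k. r ^ (CARD('n) - i) - 1)"
    using assms r by (simp add: prod_power_diff_eq reindex)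
  moreover have "(\<Prod>i<k. r ^ (i + 1) - 1) \<noteq> 0"
  proof -
    have "r ^ (i + 1) \<noteq> 1" for i using one_less_power[of r "i + 1"] r by simp
    then show ?thesis by simp
  qed
  ultimately show ?thesis
    by (simp add: gauss_binom_def r_def field_simps)
qed

section \<open>Linear functionals\<close>

definition dotp :: "'F::field ^ 'n \<Rightarrow> 'F ^ 'n \<Rightarrow> 'F" where
  "dotp u x = (\<Sum>i\<in>UNIV. u $ i * x $ i)"

definition perp :: "'F::field ^ 'n \<Rightarrow> ('F ^ 'n) set" where
  "perp u = {x. dotp u x = 0}"

lemma dotp_commute: "dotp u x = dotp x u"
  by (simp add: dotp_def mult.commute)

lemma dotp_add_left: "dotp (u + v) x = dotp u x + dotp v x"
  by (simp add: dotp_def distrib_right sum.distrib)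

lemma dotp_scale_left: "dotp (c *s u) x = c * dotp u x"
  by (simp add: dotp_def sum_distrib_left mult.assoc)

lemma dotp_add_right: "dotp u (x + y) = dotp u x + dotp u y"
  by (simp add: dotp_def distrib_left sum.distrib)

lemma dotp_scale_right: "dotp u (c *s x) = c * dotp u x"
  by (simp add: dotp_def sum_distrib_left algebra_simps)

lemma dotp_diff_right: "dotp u (x - y) = dotp u x - dotp u y"
  using dotp_add_right[of u "x - y" y] by simp

lemma subspace_perp: "vec.subspace (perp u)"
  by (simp add: vec.subspace_def perp_def dotp_add_right dotp_scale_right)
    (simp add: dotp_def)

lemma linear_functional_eq_dotp:
  fixes g :: "'F::field ^ 'n \<Rightarrow> 'F"
  assumes "Vector_Spaces.linear (*s) (*) g"
  shows "g x = dotp (\<chi> i. g (axis i 1)) x"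
proof -
  interpret g: Vector_Spaces.linear "(*s)" "(*) :: 'F \<Rightarrow> 'F \<Rightarrow> 'F" g by (rule assms)
  have "g x = g (\<Sum>i\<in>UNIV. x $ i *s axis i 1)" by (simp add: basis_expansion)
  also have "\<dots> = (\<Sum>i\<in>UNIV. x $ i * g (axis i 1))" by (simp add: g.sum g.scale)
  finally show ?thesis by (simp add: dotp_def mult.commute)
qed

lemma ex_perp_separating:
  fixes W :: "('F::field ^ 'n) set"
  assumes W: "vec.subspace W" and y: "y \<notin> W"
  shows "\<exists>u. W \<subseteq> perp u \<and> dotp u y \<noteq> 0"
proof -
  obtain B where B: "finite B" "B \<subseteq> W" "vec.independent B" "vec.span B = W" "card B = vec.dim W"
    by (rule vec.basis_subspace_exists[OF W])
  have indep: "vec.independent (insert y B)"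
    using B(3,4) y by (intro vec.independent_insertI) auto
  have pair: "vector_space_pair ((*s) :: 'F \<Rightarrow> 'F ^ 'n \<Rightarrow> 'F ^ 'n) ((*) :: 'F \<Rightarrow> 'F \<Rightarrow> 'F)"
    by (simp add: vector_space_pair_def vec.vector_space_axioms
        vector_space_over_itself.vector_space_axioms)
  obtain g where g: "Vector_Spaces.linear (*s) (*) g"
    and g_basis: "\<forall>x\<in>insert y B. g x = (if x = y then 1 else 0)"
    using vector_space_pair.linear_independent_extend[OF pair indep, of "\<lambda>x. if x = y then 1 else 0"]
    by blast
  interpret g: Vector_Spaces.linear "(*s)" "(*) :: 'F \<Rightarrow> 'F \<Rightarrow> 'F" g by (rule g)
  define u :: "'F ^ 'n" where "u = (\<chi> i. g (axis i 1))"
  have gu: "g x = dotp u x" for x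
    unfolding u_def by (rule linear_functional_eq_dotp[OF g])
  have "g b = 0" if "b \<in> B" for b
  proof -
    have "b \<noteq> y" using that y vec.span_base[OF that] B(4) by blast
    then show ?thesis using g_basis that by simp
  qed
  then have "g x = 0" if "x \<in> W" for x
    using g.eq_0_on_span[of B x] that B(4) by blast
  then have "W \<subseteq> perp u"
    by (auto simp: perp_def gu)
  moreover have "dotp u y \<noteq> 0"
    using g_basis by (simp flip: gu)
  ultimately show ?thesis by blast
qed

lemma dim_le_dim_Int_perp:
  fixes S :: "('F::field ^ 'n) set"
  assumes S: "vec.subspace S"
  shows "vec.dim S \<le> vec.dim (S \<inter> perp u) + 1"
proof (cases "S \<subseteq> perp u")
  case True
  then show ?thesis by (simp add: Int_absorb2)
next
  case False
  then obtain s where s: "s \<in> S" "dotp u s \<noteq> 0" by (auto simp: perp_def)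
  let ?T = "vec.span {s}"
  have "S \<subseteq> {x + y |x y. x \<in> S \<inter> perp u \<and> y \<in> ?T}"
  proof
    fix x assume x: "x \<in> S"
    let ?a = "dotp u x / dotp u s"
    have "x - ?a *s s \<in> S \<inter> perp u"
      using x s S by (simp add: perp_def dotp_diff_right dotp_scale_right vec.subspace_diff
          vec.subspace_scale)
    moreover have "?a *s s \<in> ?T" by (simp add: vec.span_base vec.span_scale)
    moreover have "x = (x - ?a *s s) + ?a *s s" by simp
    ultimately show "x \<in> {x + y |x y. x \<in> S \<inter> perp u \<and> y \<in> ?T}" by blast
  qed
  then have "vec.dim S \<le> vec.dim {x + y |x y. x \<in> S \<inter> perp u \<and> y \<in> ?T}"
    by (rule vec.dim_subset)
  also have "\<dots> \<le> vec.dim (S \<inter> perp u) + vec.dim ?T"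
    using vec.dim_sums_Int[OF vec.subspace_inter[OF S subspace_perp[of u]] vec.subspace_span[of "{s}"]]
    by linarith
  also have "vec.dim ?T \<le> 1"
    using vec.dim_le_card[of ?T "{s}"] by simp
  finally show ?thesis by simp
qed

lemma ex_subspace_of_dim_in_perp2:
  fixes u v :: "'F::field ^ 'n"
  assumes "k + 2 \<le> CARD('n)"
  shows "\<exists>W\<in>subspaces_of_dim k. W \<subseteq> perp u \<inter> perp v"
proof -
  have "CARD('n) \<le> vec.dim (perp u \<inter> perp v) + 2"
    using dim_le_dim_Int_perp[OF vec.subspace_UNIV, of u]
      dim_le_dim_Int_perp[OF subspace_perp, of u v]
    by (simp add: card_cart_basis)
  then obtain W where "vec.subspace W" "W \<subseteq> vec.span (perp u \<inter> perp v)" "vec.dim W = k"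
    using assms vec.choose_subspace_of_subspace[of k "perp u \<inter> perp v"] by auto
  moreover have "vec.span (perp u \<inter> perp v) = perp u \<inter> perp v"
    by (simp add: vec.span_eq_iff vec.subspace_inter subspace_perp)
  ultimately show ?thesis
    unfolding subspaces_of_dim_def by auto
qed

section \<open>Cameron-Liebler sets and partitions into affine k-spaces\<close>

lemma partition_on_UNIV_range:
  assumes "\<And>p. p \<in> f p" and "\<And>p q. q \<in> f p \<Longrightarrow> f q = f p"
  shows "partition_on UNIV (range f)"
proof (rule partition_onI)
  show "\<Union> (range f) = UNIV" using assms(1) by blast
  show "disjnt A B" if AB: "A \<in> range f" "B \<in> range f" "A \<noteq> B" for A B
  proof -
    obtain p q where "A = f p" "B = f q" using AB(1,2) by blast
    then show ?thesis using assms(2) AB(3) unfolding disjnt_def by blast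
  qed
  show "{} \<notin> range f" using assms(1) by blast
qed

definition parallel_class :: "('F::field ^ 'n) set \<Rightarrow> ('F ^ 'n) set set" where
  "parallel_class W = range (\<lambda>p. (+) p ` W)"

lemma partition_on_parallel_class:
  "vec.subspace W \<Longrightarrow> partition_on UNIV (parallel_class W)"
  unfolding parallel_class_def
  by (rule partition_on_UNIV_range) (simp_all add: mem_coset_iff vec.subspace_0 coset_eq_coset_of_mem)

lemma parallel_class_subset_affine_kspaces:
  "W \<in> subspaces_of_dim k \<Longrightarrow> parallel_class W \<subseteq> affine_kspaces k"
  by (auto simp: parallel_class_def affine_kspaces_eq_cosets)

lemma cameron_liebler_card_partition:
  fixes w :: "'F::{field,finite} ^ 'n \<Rightarrow> real"
  assumes weights: "\<forall>K\<in>affine_kspaces k. (if K \<in> L then 1 else 0) = (\<Sum>P\<in>K. w P)"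
    and partition: "partition_on UNIV \<P>" and blocks: "\<P> \<subseteq> affine_kspaces k"
  shows "real (card (\<P> \<inter> L)) = (\<Sum>P\<in>UNIV. w P)"
proof -
  have "(\<Sum>P\<in>UNIV. w P) = (\<Sum>P\<in>\<Union>\<P>. w P)"
    using partition by (simp add: partition_on_def)
  also have "\<dots> = (\<Sum>K\<in>\<P>. \<Sum>P\<in>K. w P)"
    using partition sum.Union_disjoint[of \<P> w]
    by (simp add: partition_on_def pairwise_def disjnt_def)
  also have "\<dots> = (\<Sum>K\<in>\<P>. if K \<in> L then 1 else 0)"
  proof (rule sum.cong[OF refl])
    fix K assume "K \<in> \<P>"
    then have "K \<in> affine_kspaces k" using blocks by blast
    then show "(\<Sum>P\<in>K. w P) = (if K \<in> L then 1 else 0)" using weights by simp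
  qed
  also have "\<dots> = real (card (\<P> \<inter> L))"
    by (simp add: sum.If_cases Int_def)
  finally show ?thesis ..
qed

lemma disjoint_parallel_classes:
  "vec.subspace W \<Longrightarrow> vec.subspace W' \<Longrightarrow> W \<noteq> W' \<Longrightarrow>
    parallel_class W \<inter> parallel_class W' = {}"
  by (auto simp: parallel_class_def coset_eq_coset_iff)

lemma cameron_liebler_card:
  fixes w :: "'F::{field,finite} ^ 'n \<Rightarrow> real"
  assumes "L \<subseteq> affine_kspaces k"
    and weights: "\<forall>K\<in>affine_kspaces k. (if K \<in> L then 1 else 0) = (\<Sum>P\<in>K. w P)"
  shows "real (card L) = real (card (subspaces_of_dim k :: ('F ^ 'n) set set)) * (\<Sum>P\<in>UNIV. w P)"
proof -
  have "L = (\<Union>W\<in>subspaces_of_dim k. parallel_class W \<inter> L)"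
  proof (intro equalityI subsetI)
    fix K assume "K \<in> L"
    moreover obtain p W where "W \<in> subspaces_of_dim k" "K = (+) p ` W"
      using assms(1) \<open>K \<in> L\<close> unfolding affine_kspaces_eq_cosets by blast
    ultimately show "K \<in> (\<Union>W\<in>subspaces_of_dim k. parallel_class W \<inter> L)"
      by (auto simp: parallel_class_def)
  qed blast
  also have "card \<dots> = (\<Sum>W\<in>subspaces_of_dim k. card (parallel_class W \<inter> L))"
  proof (rule card_UN_disjoint)
    show "\<forall>W\<in>subspaces_of_dim k. \<forall>W'\<in>subspaces_of_dim k. W \<noteq> W' \<longrightarrow>
        (parallel_class W \<inter> L) \<inter> (parallel_class W' \<inter> L) = {}"
      using disjoint_parallel_classes unfolding subspaces_of_dim_def by blast
  qed simp_all
  finally have "real (card L) = (\<Sum>W\<in>subspaces_of_dim k. real (card (parallel_class W \<inter> L)))"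
    by simp
  also have "\<dots> = (\<Sum>W \<in> (subspaces_of_dim k :: ('F ^ 'n) set set). \<Sum>P\<in>UNIV. w P)"
  proof (rule sum.cong[OF refl])
    fix W :: "('F ^ 'n) set" assume W: "W \<in> subspaces_of_dim k"
    show "real (card (parallel_class W \<inter> L)) = (\<Sum>P\<in>UNIV. w P)"
    proof (rule cameron_liebler_card_partition[OF weights])
      show "partition_on UNIV (parallel_class W)"
        using W by (simp add: partition_on_parallel_class subspaces_of_dim_def)
      show "parallel_class W \<subseteq> affine_kspaces k"
        using W by (rule parallel_class_subset_affine_kspaces)
    qed
  qed
  finally show ?thesis by simp
qed

lemma cameron_liebler_parameter_1_card_partition:
  fixes L :: "('F::{field,finite} ^ 'n) set set"
  assumes "k \<le> CARD('n)" and "cameron_liebler k L" and "cl_parameter k L = 1"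
    and "partition_on UNIV \<P>" and "\<P> \<subseteq> affine_kspaces k"
  shows "card (\<P> \<inter> L) = 1"
proof -
  obtain w :: "'F ^ 'n \<Rightarrow> real" where L: "L \<subseteq> affine_kspaces k"
    and weights: "\<forall>K\<in>affine_kspaces k. (if K \<in> L then 1 else 0) = (\<Sum>P\<in>K. w P)"
    using assms(2) unfolding cameron_liebler_def by blast
  let ?N = "real (card (subspaces_of_dim k :: ('F ^ 'n) set set))"
  have "real (card L) / ?N = 1"
    using assms(3) unfolding cl_parameter_def card_subspaces_of_dim[OF assms(1)] .
  then have N: "?N \<noteq> 0" "real (card L) = ?N" by (auto simp only: divide_eq_1_iff)
  then have "?N * (\<Sum>P\<in>UNIV. w P) = ?N * 1"
    using cameron_liebler_card[OF L weights] by linarith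
  then have "(\<Sum>P\<in>UNIV. w P) = 1"
    using N(1) mult_left_cancel by blast
  then show ?thesis
    using cameron_liebler_card_partition[OF weights assms(4,5)] by simp
qed

section \<open>Sets of affine k-spaces meeting every partition exactly once\<close>

locale meets_partitions_once =
  fixes k :: nat and L :: "('F::{field,finite} ^ 'n) set set"
  assumes L_subset: "L \<subseteq> affine_kspaces k"
    and card_partition_Int:
      "\<And>\<P>. partition_on UNIV \<P> \<Longrightarrow> \<P> \<subseteq> affine_kspaces k \<Longrightarrow> card (\<P> \<inter> L) = 1"
begin

lemma ex_coset_mem:
  assumes "W \<in> subspaces_of_dim k"
  shows "\<exists>p. (+) p ` W \<in> L"
proof -
  have "card (parallel_class W \<inter> L) = 1"
    using assms by (intro card_partition_Int partition_on_parallel_class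
        parallel_class_subset_affine_kspaces) (simp_all add: subspaces_of_dim_def)
  then obtain K where "K \<in> parallel_class W \<inter> L" by (metis card_1_singletonE insertI1)
  then show ?thesis by (auto simp: parallel_class_def)
qed

lemma members_in_same_coset:
  assumes M: "vec.subspace M"
    and W1: "W1 \<in> subspaces_of_dim k" "W1 \<subseteq> M" and W2: "W2 \<in> subspaces_of_dim k" "W2 \<subseteq> M"
    and L1: "(+) p1 ` W1 \<in> L" and L2: "(+) p2 ` W2 \<in> L"
  shows "p1 - p2 \<in> M"
proof (rule ccontr)
  assume not_M: "p1 - p2 \<notin> M"
  have S1: "vec.subspace W1" and S2: "vec.subspace W2"
    using W1(1) W2(1) by (simp_all add: subspaces_of_dim_def)
  define f where "f p = (if p - p1 \<in> M then (+) p ` W1 else (+) p ` W2)" for p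
  have same_side: "q - p1 \<in> M \<longleftrightarrow> p - p1 \<in> M" if "q - p \<in> M" for p q
    using subspace_add_mem_iff[OF M that, of "p - p1"] by simp
  have "partition_on UNIV (range f)"
  proof (rule partition_on_UNIV_range)
    show "p \<in> f p" for p
      by (simp add: f_def mem_coset_iff S1 S2 vec.subspace_0)
    show "f q = f p" if q: "q \<in> f p" for p q
    proof (cases "p - p1 \<in> M")
      case True
      then have "q \<in> (+) p ` W1" using q by (simp add: f_def)
      moreover from this have "q - p \<in> M" using W1(2) mem_coset_iff by blast
      ultimately show ?thesis
        using True same_side coset_eq_coset_of_mem[OF S1] by (simp add: f_def)
    next
      case False
      then have "q \<in> (+) p ` W2" using q by (simp add: f_def)
      moreover from this have "q - p \<in> M" using W2(2) mem_coset_iff by blast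
      ultimately show ?thesis
        using False same_side coset_eq_coset_of_mem[OF S2] by (simp add: f_def)
    qed
  qed
  moreover have "range f \<subseteq> affine_kspaces k"
    using W1(1) W2(1) by (auto simp: f_def affine_kspaces_eq_cosets)
  ultimately have one: "card (range f \<inter> L) = 1" by (rule card_partition_Int)
  have "p2 - p1 \<notin> M"
    using not_M vec.subspace_neg[OF M, of "p2 - p1"] by auto
  then have "f p1 = (+) p1 ` W1" and "f p2 = (+) p2 ` W2"
    by (simp_all add: f_def vec.subspace_0[OF M])
  then have "{(+) p1 ` W1, (+) p2 ` W2} \<subseteq> range f \<inter> L"
    using L1 L2 by (metis Int_iff empty_subsetI insert_subset rangeI)
  moreover have "(+) p1 ` W1 \<noteq> (+) p2 ` W2"
  proof
    assume eq: "(+) p1 ` W1 = (+) p2 ` W2"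
    have "p1 \<in> (+) p1 ` W1" by (simp add: mem_coset_iff S1 vec.subspace_0)
    then have "p1 \<in> (+) p2 ` W2" by (simp only: eq)
    then show False using not_M W2(2) mem_coset_iff by blast
  qed
  ultimately have "2 \<le> card (range f \<inter> L)"
    using card_mono[of "range f \<inter> L" "{(+) p1 ` W1, (+) p2 ` W2}"] by simp
  then show False using one by simp
qed

(* The value does not depend on the chosen member by members_in_same_coset; the choice is
   arbitrary only when no member of L has its direction inside perp u. *)
definition level :: "'F ^ 'n \<Rightarrow> 'F" where
  "level u = dotp u (SOME p. \<exists>W\<in>subspaces_of_dim k. W \<subseteq> perp u \<and> (+) p ` W \<in> L)"

lemma level_eq:
  assumes "W \<in> subspaces_of_dim k" "W \<subseteq> perp u" "(+) p ` W \<in> L"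
  shows "dotp u p = level u"
proof -
  let ?P = "\<lambda>p. \<exists>W\<in>subspaces_of_dim k. W \<subseteq> perp u \<and> (+) p ` W \<in> L"
  obtain W0 where W0: "W0 \<in> subspaces_of_dim k" "W0 \<subseteq> perp u" "(+) (SOME p. ?P p) ` W0 \<in> L"
    using someI[of ?P p] assms by blast
  have "p - (SOME p. ?P p) \<in> perp u"
    by (rule members_in_same_coset[OF subspace_perp assms(1,2) W0(1,2) assms(3) W0(3)])
  then show ?thesis by (simp add: level_def perp_def dotp_diff_right)
qed

lemma ex_member_in_perp2:
  assumes "k + 2 \<le> CARD('n)"
  shows "\<exists>W p. W \<in> subspaces_of_dim k \<and> W \<subseteq> perp u \<inter> perp v \<and> (+) p ` W \<in> L"
proof -
  obtain W where "W \<in> subspaces_of_dim k" "W \<subseteq> perp u \<inter> perp v"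
    using ex_subspace_of_dim_in_perp2[OF assms] by blast
  moreover obtain p where "(+) p ` W \<in> L" using ex_coset_mem[OF \<open>W \<in> subspaces_of_dim k\<close>] ..
  ultimately show ?thesis by blast
qed

lemma linear_level:
  assumes "k + 2 \<le> CARD('n)"
  shows "Vector_Spaces.linear (*s) (*) level"
  unfolding Vector_Spaces.linear_iff
proof (intro conjI allI)
  show "vector_space ((*s) :: 'F \<Rightarrow> 'F ^ 'n \<Rightarrow> 'F ^ 'n)" by (rule vec.vector_space_axioms)
  show "vector_space ((*) :: 'F \<Rightarrow> 'F \<Rightarrow> 'F)" by (rule vector_space_over_itself.vector_space_axioms)
next
  fix u v
  obtain W p where W: "W \<in> subspaces_of_dim k" "W \<subseteq> perp u \<inter> perp v" "(+) p ` W \<in> L"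
    using ex_member_in_perp2[OF assms] by blast
  then have "W \<subseteq> perp (u + v)" by (auto simp: perp_def dotp_add_left subset_iff)
  then have "level (u + v) = dotp (u + v) p" using W by (simp add: level_eq)
  also have "\<dots> = level u + level v"
    using W by (simp add: dotp_add_left level_eq)
  finally show "level (u + v) = level u + level v" .
next
  fix c u
  obtain W p where W: "W \<in> subspaces_of_dim k" "W \<subseteq> perp u \<inter> perp u" "(+) p ` W \<in> L"
    using ex_member_in_perp2[OF assms] by blast
  then have "W \<subseteq> perp (c *s u)" by (auto simp: perp_def dotp_scale_left subset_iff)
  then have "level (c *s u) = dotp (c *s u) p" using W by (simp add: level_eq)
  also have "\<dots> = c * level u"
    using W by (simp add: dotp_scale_left level_eq)
  finally show "level (c *s u) = c * level u" .
qed

lemma ex_common_point: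
  assumes "k + 2 \<le> CARD('n)"
  shows "\<exists>P. \<forall>K\<in>L. P \<in> K"
proof -
  define P :: "'F ^ 'n" where "P = (\<chi> i. level (axis i 1))"
  have level_P: "level u = dotp u P" for u
  proof -
    have "level u = dotp P u"
      unfolding P_def by (rule linear_functional_eq_dotp[OF linear_level[OF assms]])
    then show ?thesis by (simp only: dotp_commute)
  qed
  have "P \<in> K" if "K \<in> L" for K
  proof -
    obtain p W where W: "W \<in> subspaces_of_dim k" and K: "K = (+) p ` W"
      using L_subset \<open>K \<in> L\<close> unfolding affine_kspaces_eq_cosets by blast
    then have S: "vec.subspace W" by (simp add: subspaces_of_dim_def)
    show "P \<in> K"
    proof (rule ccontr)
      assume "P \<notin> K"
      then have "P - p \<notin> W" using K mem_coset_iff by blast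
      then obtain u where u: "W \<subseteq> perp u" "dotp u (P - p) \<noteq> 0"
        using ex_perp_separating[OF S] by blast
      have "dotp u p = dotp u P"
        using level_eq[OF W u(1)] \<open>K \<in> L\<close> K level_P by simp
      then show False using u(2) by (simp add: dotp_diff_right)
    qed
  qed
  then show ?thesis by blast
qed

lemma ex_pencil_eq:
  assumes "k + 2 \<le> CARD('n)"
  shows "\<exists>P. L = {K \<in> affine_kspaces k. P \<in> K}"
proof -
  obtain P where P: "\<forall>K\<in>L. P \<in> K" using ex_common_point[OF assms] by blast
  have "K \<in> L" if K: "K \<in> affine_kspaces k" "P \<in> K" for K
  proof -
    obtain p W where W: "W \<in> subspaces_of_dim k" and K_eq: "K = (+) p ` W"
      using K(1) unfolding affine_kspaces_eq_cosets by blast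
    then have S: "vec.subspace W" by (simp add: subspaces_of_dim_def)
    obtain p' where L': "(+) p' ` W \<in> L" using ex_coset_mem[OF W] ..
    have "(+) p ` W = (+) P ` W" using K(2) K_eq coset_eq_coset_of_mem[OF S] by simp
    also have "\<dots> = (+) p' ` W" using P L' coset_eq_coset_of_mem[OF S] by blast
    finally show ?thesis using K_eq L' by simp
  qed
  then show ?thesis using P L_subset by blast
qed

end

theorem theorem6p5:
  fixes L :: "('F::{field,finite} ^ 'n) set set" and k :: nat
  assumes "k \<ge> 1" and "CARD('n) \<ge> 2 * k + 1"
    and "cameron_liebler k L"
    and "cl_parameter k L = 1"
  shows "\<exists>P :: 'F ^ 'n. L = {K \<in> affine_kspaces k. P \<in> K}"
proof -
  have dim: "k + 2 \<le> CARD('n)" using assms(1,2) by linarith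
  interpret meets_partitions_once k L
  proof
    show "L \<subseteq> affine_kspaces k" using assms(3) by (simp add: cameron_liebler_def)
    show "card (\<P> \<inter> L) = 1" if "partition_on UNIV \<P>" "\<P> \<subseteq> affine_kspaces k" for \<P>
      using cameron_liebler_parameter_1_card_partition[OF _ assms(3,4) that] dim by simp
  qed
  show ?thesis using ex_pencil_eq[OF dim] .
qed

end
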